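(* Let $P_n$ be the path on $n$ vertices. Then $\mathrm{GG}(P_n) \sim \pi\sqrt{n-2}$ as $n \to \infty$, i.e. $\lim_{n\to\infty} \mathrm{GG}(P_n)/(\pi\sqrt{n-2}) = 1$.
   Context: For a connected graph $G$ and an edge $uv$, let $n_u$ (resp. $n_v$) be the number of vertices of $G$ strictly closer (in shortest-path distance) to $u$ than to $v$ (resp. to $v$ than to $u$). The Graovac-Ghorbani index is $\mathrm{GG}(G) = \sum_{uv \in E(G)} \sqrt{\frac{n_u + n_v - 2}{n_u n_v}}$. *)

theory Defs
  imports "HOL-Analysis.Analysis"
begin

definition simple_graph :: "'a set \<Rightarrow> ('a \<Rightarrow> 'a \<Rightarrow> bool) \<Rightarrow> bool" where
  "simple_graph V E \<longleftrightarrow> finite V \<and> (\<forall>u v. E u v \<longrightarrow> u \<in> V \<and> v \<in> V)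
     \<and> (\<forall>u v. E u v \<longrightarrow> E v u) \<and> (\<forall>u. \<not> E u u)"

text \<open>A walk of length k from u to v: vertex list of length k+1.\<close>
definition is_walk :: "('a \<Rightarrow> 'a \<Rightarrow> bool) \<Rightarrow> 'a list \<Rightarrow> bool" where
  "is_walk E xs \<longleftrightarrow> xs \<noteq> [] \<and> (\<forall>i. Suc i < length xs \<longrightarrow> E (xs ! i) (xs ! Suc i))"

definition gdist :: "('a \<Rightarrow> 'a \<Rightarrow> bool) \<Rightarrow> 'a \<Rightarrow> 'a \<Rightarrow> nat" where
  "gdist E u v = (LEAST k. \<exists>xs. is_walk E xs \<and> hd xs = u \<and> last xs = v \<and> length xs = Suc k)"

definition connected_graph :: "'a set \<Rightarrow> ('a \<Rightarrow> 'a \<Rightarrow> bool) \<Rightarrow> bool" where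
  "connected_graph V E \<longleftrightarrow> simple_graph V E \<and> V \<noteq> {} \<and>
     (\<forall>u\<in>V. \<forall>v\<in>V. \<exists>xs. is_walk E xs \<and> hd xs = u \<and> last xs = v)"

definition n_closer :: "'a set \<Rightarrow> ('a \<Rightarrow> 'a \<Rightarrow> bool) \<Rightarrow> 'a \<Rightarrow> 'a \<Rightarrow> nat" where
  "n_closer V E u v = card {w \<in> V. gdist E w u < gdist E w v}"

definition edges :: "('a \<Rightarrow> 'a \<Rightarrow> bool) \<Rightarrow> 'a set set" where
  "edges E = {{u, v} | u v. E u v}"

text \<open>Graovac-Ghorbani index: sum over (unordered) edges. The summand is
symmetric in u and v, so we pick any orientation of the edge.\<close>
definition GG :: "'a set \<Rightarrow> ('a \<Rightarrow> 'a \<Rightarrow> bool) \<Rightarrow> real" where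
  "GG V E = (\<Sum>e\<in>edges E. let (u, v) = (SOME p. e = {fst p, snd p} \<and> E (fst p) (snd p));
       nu = real (n_closer V E u v); nv = real (n_closer V E v u)
     in sqrt ((nu + nv - 2) / (nu * nv)))"

definition path_V :: "nat \<Rightarrow> nat set" where
  "path_V n = {0..<n}"

definition path_E :: "nat \<Rightarrow> nat \<Rightarrow> nat \<Rightarrow> bool" where
  "path_E n i j \<longleftrightarrow> i < n \<and> j < n \<and> (j = Suc i \<or> i = Suc j)"

end

theory Submission
  imports Defs
begin

text \<open>On the path \<open>P\<^sub>n\<close> the edge \<open>{i, i+1}\<close> separates \<open>i+1\<close> vertices from \<open>n-i-1\<close>, so
\<open>GG(P\<^sub>n) = sqrt(n-2) * (\<Sum>i=1..<n. 1 / sqrt(i (n-i)))\<close>. This sum is a Riemann sum of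
\<open>1 / sqrt(x (n-x))\<close>, whose integral over \<open>[0,n]\<close> is \<open>\<pi>\<close>, with primitive \<open>arcsin(2x/n - 1)\<close>.
The integrand decreases on \<open>(0,n/2]\<close> and increases on \<open>[n/2,n)\<close>, so on each half the
sum is squeezed between integrals (by the mean value theorem on every unit interval); the
lower and upper bounds differ from \<open>\<pi>\<close> only by integrals over intervals of length at most
one at the endpoints and at the midpoint, and these vanish as \<open>n \<rightarrow> \<infinity>\<close>.\<close>

lemma is_walk_Cons_Cons: "is_walk E (a # b # ys) \<longleftrightarrow> E a b \<and> is_walk E (b # ys)"
  unfolding is_walk_def by (auto simp: less_Suc_eq_0_disj)

lemma path_walk_length_gt:
  "is_walk (path_E n) xs \<Longrightarrow> (hd xs - last xs) + (last xs - hd xs) < length xs"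
proof (induction xs)
  case Nil
  then show ?case by (simp add: is_walk_def)
next
  case (Cons a xs)
  show ?case
  proof (cases xs)
    case Nil
    then show ?thesis by simp
  next
    case (Cons b ys)
    with Cons.prems have edge: "path_E n a b" and walk: "is_walk (path_E n) xs"
      by (auto simp: is_walk_Cons_Cons)
    have "(b - last xs) + (last xs - b) < length xs"
      using Cons.IH[OF walk] Cons by simp
    moreover have "(a - last xs) + (last xs - a) \<le> Suc ((b - last xs) + (last xs - b))"
      using edge unfolding path_E_def by arith
    ultimately show ?thesis
      using Cons by simp
  qed
qed

lemma path_walk_exists:
  assumes "u < n" "v < n"
  shows "\<exists>xs. is_walk (path_E n) xs \<and> hd xs = u \<and> last xs = v \<and> length xs = Suc ((u - v) + (v - u))"
proof (cases "u \<le> v")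
  case True
  let ?xs = "map (\<lambda>i. u + i) [0..<Suc (v - u)]"
  have "is_walk (path_E n) ?xs"
    using True assms unfolding is_walk_def path_E_def by (auto simp del: upt_Suc)
  moreover have "hd ?xs = u" "last ?xs = v"
    using True by (simp_all add: hd_map last_map del: upt_Suc)
  ultimately show ?thesis using True by (auto simp del: upt_Suc)
next
  case False
  let ?xs = "map (\<lambda>i. u - i) [0..<Suc (u - v)]"
  have "is_walk (path_E n) ?xs"
    using False assms unfolding is_walk_def path_E_def by (auto simp del: upt_Suc)
  moreover have "hd ?xs = u" "last ?xs = v"
    using False by (simp_all add: hd_map last_map del: upt_Suc)
  ultimately show ?thesis using False by (auto simp del: upt_Suc)
qed

lemma gdist_path_E: "u < n \<Longrightarrow> v < n \<Longrightarrow> gdist (path_E n) u v = (u - v) + (v - u)"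
  unfolding gdist_def
proof (rule Least_equality)
  fix k
  assume "\<exists>xs. is_walk (path_E n) xs \<and> hd xs = u \<and> last xs = v \<and> length xs = Suc k"
  then show "(u - v) + (v - u) \<le> k"
    using path_walk_length_gt by fastforce
qed (rule path_walk_exists)

lemma n_closer_path_E_left: "Suc i < n \<Longrightarrow> n_closer (path_V n) (path_E n) i (Suc i) = Suc i"
proof -
  assume "Suc i < n"
  then have "{w \<in> path_V n. gdist (path_E n) w i < gdist (path_E n) w (Suc i)} = {..i}"
    by (auto simp: path_V_def gdist_path_E)
  then show ?thesis by (simp add: n_closer_def)
qed

lemma n_closer_path_E_right: "Suc i < n \<Longrightarrow> n_closer (path_V n) (path_E n) (Suc i) i = n - Suc i"
proof -
  assume "Suc i < n"
  then have "{w \<in> path_V n. gdist (path_E n) w (Suc i) < gdist (path_E n) w i} = {Suc i..<n}"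
    by (auto simp: path_V_def gdist_path_E)
  then show ?thesis by (simp add: n_closer_def)
qed

definition GG_edge_weight :: "'a set \<Rightarrow> ('a \<Rightarrow> 'a \<Rightarrow> bool) \<Rightarrow> 'a \<Rightarrow> 'a \<Rightarrow> real" where
  "GG_edge_weight V E u v = (let nu = real (n_closer V E u v); nv = real (n_closer V E v u)
     in sqrt ((nu + nv - 2) / (nu * nv)))"

lemma GG_edge_weight_commute: "GG_edge_weight V E u v = GG_edge_weight V E v u"
  by (simp add: GG_edge_weight_def Let_def add.commute mult.commute)

lemma GG_eq_sum_GG_edge_weight:
  assumes inj: "inj_on (\<lambda>i. {a i, b i}) I"
    and edges: "edges E = (\<lambda>i. {a i, b i}) ` I"
    and adj: "\<And>i. i \<in> I \<Longrightarrow> E (a i) (b i)"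
  shows "GG V E = (\<Sum>i\<in>I. GG_edge_weight V E (a i) (b i))"
proof -
  let ?orient = "\<lambda>e. SOME p. e = {fst p, snd p} \<and> E (fst p) (snd p)"
  have "GG V E = (\<Sum>e\<in>edges E. case ?orient e of (u, v) \<Rightarrow> GG_edge_weight V E u v)"
    unfolding GG_def GG_edge_weight_def by (simp only: Let_def)
  also have "\<dots> = (\<Sum>i\<in>I. case ?orient {a i, b i} of (u, v) \<Rightarrow> GG_edge_weight V E u v)"
    unfolding edges by (rule sum.reindex[OF inj, unfolded comp_def])
  also have "\<dots> = (\<Sum>i\<in>I. GG_edge_weight V E (a i) (b i))"
  proof (rule sum.cong[OF refl])
    fix i assume "i \<in> I"
    then have "{a i, b i} = {fst (?orient {a i, b i}), snd (?orient {a i, b i})}"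
      using someI[of "\<lambda>p. {a i, b i} = {fst p, snd p} \<and> E (fst p) (snd p)" "(a i, b i)"] adj
      by auto
    then have "?orient {a i, b i} = (a i, b i) \<or> ?orient {a i, b i} = (b i, a i)"
      by (cases "?orient {a i, b i}") (auto simp: doubleton_eq_iff)
    then show "(case ?orient {a i, b i} of (u, v) \<Rightarrow> GG_edge_weight V E u v)
        = GG_edge_weight V E (a i) (b i)"
      using GG_edge_weight_commute by auto
  qed
  finally show ?thesis .
qed

lemma edges_path_E: "edges (path_E n) = (\<lambda>i. {i, Suc i}) ` {..<n - 1}"
proof -
  have "{i, Suc i} \<in> edges (path_E n)" if "i < n - 1" for i
    using that unfolding edges_def path_E_def by force
  then show ?thesis
    unfolding edges_def path_E_def by (auto simp: insert_commute)
qed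

lemma unit_step_MVT:
  fixes F f :: "real \<Rightarrow> real"
  assumes "m \<le> j" "j < k"
    and deriv: "\<And>x. real m < x \<Longrightarrow> x < real k \<Longrightarrow> (F has_real_derivative f x) (at x)"
    and cont: "continuous_on {real m..real k} F"
  obtains z where "real j < z" "z < real (Suc j)" "F (real (Suc j)) - F (real j) = f z"
proof -
  have "continuous_on {real j..real (Suc j)} F"
    by (rule continuous_on_subset[OF cont]) (use assms in auto)
  moreover have "F differentiable (at x)" if "real j < x" "x < real (Suc j)" for x
    using deriv[of x] that assms real_differentiable_def by force
  ultimately obtain l z where z: "real j < z" "z < real (Suc j)" "(F has_real_derivative l) (at z)"
      "F (real (Suc j)) - F (real j) = l"
    using MVT[of "real j" "real (Suc j)" F] by auto
  moreover have "(F has_real_derivative f z) (at z)"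
    using deriv z assms by force
  ultimately show thesis
    using that DERIV_unique by metis
qed

text \<open>Monotonicity is only required where \<open>f\<close> is sampled, a half-open interval: the
integrand \<open>1 / sqrt(x (n-x))\<close> is singular at \<open>0\<close> and \<open>n\<close>, where it has the junk value \<open>0\<close>.\<close>

lemma antimono_sum_Suc_le_diff:
  fixes F f :: "real \<Rightarrow> real"
  assumes "m \<le> k"
    and deriv: "\<And>x. real m < x \<Longrightarrow> x < real k \<Longrightarrow> (F has_real_derivative f x) (at x)"
    and cont: "continuous_on {real m..real k} F"
    and anti: "antimono_on {real m<..real k} f"
  shows "(\<Sum>j=m..<k. f (real (Suc j))) \<le> F (real k) - F (real m)"
proof -
  have "f (real (Suc j)) \<le> F (real (Suc j)) - F (real j)" if "j \<in> {m..<k}" for j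
  proof -
    from that have "m \<le> j" "j < k" by auto
    then obtain z where z: "real j < z" "z < real (Suc j)" "F (real (Suc j)) - F (real j) = f z"
      by (rule unit_step_MVT[OF _ _ deriv cont])
    have "f (real (Suc j)) \<le> f z"
      by (rule monotone_onD[OF anti]) (use z that in auto)
    with z show ?thesis by simp
  qed
  then have "(\<Sum>j=m..<k. f (real (Suc j))) \<le> (\<Sum>j=m..<k. F (real (Suc j)) - F (real j))"
    by (rule sum_mono)
  also have "\<dots> = F (real k) - F (real m)"
    using sum_Suc_diff'[OF \<open>m \<le> k\<close>, of "\<lambda>j. F (real j)"] by simp
  finally show ?thesis .
qed

lemma antimono_diff_le_sum:
  fixes F f :: "real \<Rightarrow> real"
  assumes "m \<le> k"
    and deriv: "\<And>x. real m < x \<Longrightarrow> x < real k \<Longrightarrow> (F has_real_derivative f x) (at x)"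
    and cont: "continuous_on {real m..real k} F"
    and anti: "antimono_on {real m..<real k} f"
  shows "F (real k) - F (real m) \<le> (\<Sum>j=m..<k. f (real j))"
proof -
  have "F (real (Suc j)) - F (real j) \<le> f (real j)" if "j \<in> {m..<k}" for j
  proof -
    from that have "m \<le> j" "j < k" by auto
    then obtain z where z: "real j < z" "z < real (Suc j)" "F (real (Suc j)) - F (real j) = f z"
      by (rule unit_step_MVT[OF _ _ deriv cont])
    have "f z \<le> f (real j)"
      by (rule monotone_onD[OF anti]) (use z that in auto)
    with z show ?thesis by simp
  qed
  then have "(\<Sum>j=m..<k. F (real (Suc j)) - F (real j)) \<le> (\<Sum>j=m..<k. f (real j))"
    by (rule sum_mono)
  moreover have "(\<Sum>j=m..<k. F (real (Suc j)) - F (real j)) = F (real k) - F (real m)"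
    using sum_Suc_diff'[OF \<open>m \<le> k\<close>, of "\<lambda>j. F (real j)"] by simp
  ultimately show ?thesis by simp
qed

lemma mono_sum_le_diff:
  fixes F f :: "real \<Rightarrow> real"
  assumes "m \<le> k"
    and deriv: "\<And>x. real m < x \<Longrightarrow> x < real k \<Longrightarrow> (F has_real_derivative f x) (at x)"
    and cont: "continuous_on {real m..real k} F"
    and mono: "mono_on {real m..<real k} f"
  shows "(\<Sum>j=m..<k. f (real j)) \<le> F (real k) - F (real m)"
proof -
  have "(\<lambda>x. - F x) (real k) - (\<lambda>x. - F x) (real m) \<le> (\<Sum>j=m..<k. - f (real j))"
  proof (rule antimono_diff_le_sum[OF \<open>m \<le> k\<close>])
    show "((\<lambda>x. - F x) has_real_derivative - f x) (at x)" if "real m < x" "x < real k" for x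
      using deriv[OF that] by (rule DERIV_minus)
    show "continuous_on {real m..real k} (\<lambda>x. - F x)"
      using cont by (rule continuous_on_minus)
    show "antimono_on {real m..<real k} (\<lambda>x. - f x)"
      using mono by (auto simp: monotone_on_def)
  qed
  then show ?thesis by (simp add: sum_negf)
qed

lemma mono_diff_le_sum_Suc:
  fixes F f :: "real \<Rightarrow> real"
  assumes "m \<le> k"
    and deriv: "\<And>x. real m < x \<Longrightarrow> x < real k \<Longrightarrow> (F has_real_derivative f x) (at x)"
    and cont: "continuous_on {real m..real k} F"
    and mono: "mono_on {real m<..real k} f"
  shows "F (real k) - F (real m) \<le> (\<Sum>j=m..<k. f (real (Suc j)))"
proof -
  have "(\<Sum>j=m..<k. - f (real (Suc j))) \<le> (\<lambda>x. - F x) (real k) - (\<lambda>x. - F x) (real m)"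
  proof (rule antimono_sum_Suc_le_diff[OF \<open>m \<le> k\<close>])
    show "((\<lambda>x. - F x) has_real_derivative - f x) (at x)" if "real m < x" "x < real k" for x
      using deriv[OF that] by (rule DERIV_minus)
    show "continuous_on {real m..real k} (\<lambda>x. - F x)"
      using cont by (rule continuous_on_minus)
    show "antimono_on {real m<..real k} (\<lambda>x. - f x)"
      using mono by (auto simp: monotone_on_def)
  qed
  then show ?thesis by (simp add: sum_negf)
qed

definition arcsine_weight :: "real \<Rightarrow> real \<Rightarrow> real" where
  "arcsine_weight c x = 1 / sqrt (x * (c - x))"

definition arcsine_primitive :: "real \<Rightarrow> real \<Rightarrow> real" where
  "arcsine_primitive c x = arcsin (2 * x / c - 1)"

lemma arcsine_primitive_has_real_derivative:
  assumes "0 < x" "x < c"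
  shows "(arcsine_primitive c has_real_derivative arcsine_weight c x) (at x)"
proof -
  let ?y = "2 * x / c - 1"
  have c: "0 < c" using assms by linarith
  have "-1 < ?y" "?y < 1" using assms c by (auto simp: field_simps)
  then have "((\<lambda>x. arcsin (2 * x / c - 1)) has_real_derivative
      inverse (sqrt (1 - ?y\<^sup>2)) * (2 / c)) (at x)"
    by (auto intro!: derivative_eq_intros)
  moreover have "1 - ?y\<^sup>2 = (2 / c)\<^sup>2 * (x * (c - x))"
    using c by (simp add: field_simps power2_eq_square)
  then have "sqrt (1 - ?y\<^sup>2) = 2 / c * sqrt (x * (c - x))"
    using c by (simp add: real_sqrt_mult)
  then have "inverse (sqrt (1 - ?y\<^sup>2)) * (2 / c) = arcsine_weight c x"
    using c assms by (simp add: arcsine_weight_def field_simps)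
  ultimately show ?thesis unfolding arcsine_primitive_def by simp
qed

lemma continuous_on_arcsine_primitive:
  "0 < c \<Longrightarrow> 0 \<le> a \<Longrightarrow> b \<le> c \<Longrightarrow> continuous_on {a..b} (arcsine_primitive c)"
  unfolding arcsine_primitive_def by (intro continuous_intros) (auto simp: field_simps)

lemma arcsine_primitive_mono:
  "0 < c \<Longrightarrow> 0 \<le> x \<Longrightarrow> x \<le> y \<Longrightarrow> y \<le> c \<Longrightarrow> arcsine_primitive c x \<le> arcsine_primitive c y"
  unfolding arcsine_primitive_def by (rule arcsin_le_arcsin) (auto simp: field_simps)

lemma arcsine_primitive_0 [simp]: "0 < c \<Longrightarrow> arcsine_primitive c 0 = - pi / 2"
  and arcsine_primitive_self [simp]: "0 < c \<Longrightarrow> arcsine_primitive c c = pi / 2"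
  by (simp_all add: arcsine_primitive_def)

lemma arcsine_primitive_reflect:
  assumes "0 < c" "0 \<le> x" "x \<le> c"
  shows "arcsine_primitive c (c - x) = - arcsine_primitive c x"
proof -
  have "2 * (c - x) / c - 1 = - (2 * x / c - 1)" using assms by (simp add: field_simps)
  moreover have "-1 \<le> 2 * x / c - 1" "2 * x / c - 1 \<le> 1" using assms by (auto simp: field_simps)
  ultimately show ?thesis unfolding arcsine_primitive_def by (metis arcsin_minus)
qed

lemma arcsine_primitive_ge_near_midpoint:
  assumes "1 \<le> c" "c - 1 \<le> 2 * x" "x \<le> c"
  shows "- arcsin (1 / c) \<le> arcsine_primitive c x"
proof -
  have "-1 \<le> - (1 / c)" "- (1 / c) \<le> 2 * x / c - 1" "2 * x / c - 1 \<le> 1"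
    using assms by (auto simp: field_simps)
  then have "arcsin (- (1 / c)) \<le> arcsine_primitive c x"
    unfolding arcsine_primitive_def by (rule arcsin_le_arcsin)
  moreover have "arcsin (- (1 / c)) = - arcsin (1 / c)"
    using assms by (intro arcsin_minus) (auto simp: field_simps)
  ultimately show ?thesis by simp
qed

lemma antimono_on_arcsine_weight: "antimono_on {0<..c/2} (arcsine_weight c)"
proof (rule monotone_onI)
  fix x y assume "x \<in> {0<..c/2}" "y \<in> {0<..c/2}" "x \<le> y"
  then have "0 < x * (c - x)" "0 \<le> (y - x) * (c - x - y)" by auto
  moreover have "y * (c - y) - x * (c - x) = (y - x) * (c - x - y)" by algebra
  ultimately show "arcsine_weight c y \<le> arcsine_weight c x"
    unfolding arcsine_weight_def by (auto intro!: divide_left_mono mult_pos_pos)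
qed

lemma mono_on_arcsine_weight: "mono_on {c/2..<c} (arcsine_weight c)"
proof (rule monotone_onI)
  fix x y assume "x \<in> {c/2..<c}" "y \<in> {c/2..<c}" "x \<le> y"
  then have "0 < y * (c - y)" "0 \<le> (y - x) * (x + y - c)" by auto
  moreover have "x * (c - x) - y * (c - y) = (y - x) * (x + y - c)" by algebra
  ultimately show "arcsine_weight c x \<le> arcsine_weight c y"
    unfolding arcsine_weight_def by (auto intro!: divide_left_mono mult_pos_pos)
qed

lemma sum_arcsine_weight_le_pi:
  fixes n :: nat
  assumes "1 \<le> n"
  shows "(\<Sum>i=1..<n. arcsine_weight n (real i)) \<le> pi"
proof -
  define h where "h = n div 2"
  have h: "h < n" "2 * h \<le> n" "n \<le> 2 * h + 1" using assms by (auto simp: h_def)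
  let ?F = "arcsine_primitive n" and ?f = "arcsine_weight n"
  have n: "0 < real n" using assms by simp
  have left: "(\<Sum>j=0..<h. ?f (real (Suc j))) \<le> ?F (real h) - ?F (real 0)"
  proof (rule antimono_sum_Suc_le_diff)
    show "antimono_on {real 0<..real h} ?f"
      by (rule monotone_on_subset[OF antimono_on_arcsine_weight]) (use h in auto)
  qed (use h n in
      \<open>auto intro: arcsine_primitive_has_real_derivative continuous_on_arcsine_primitive\<close>)
  have right: "(\<Sum>j=Suc h..<n. ?f (real j)) \<le> ?F (real n) - ?F (real (Suc h))"
  proof (rule mono_sum_le_diff)
    show "mono_on {real (Suc h)..<real n} ?f"
      by (rule monotone_on_subset[OF mono_on_arcsine_weight]) (use h in auto)
  qed (use h n in
      \<open>auto intro: arcsine_primitive_has_real_derivative continuous_on_arcsine_primitive\<close>)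
  have "(\<Sum>i=1..<n. ?f i) = (\<Sum>i=1..<Suc h. ?f i) + (\<Sum>i=Suc h..<n. ?f i)"
    using h by (intro sum.atLeastLessThan_concat[symmetric]) auto
  also have "\<dots> = (\<Sum>j=0..<h. ?f (real (Suc j))) + (\<Sum>j=Suc h..<n. ?f (real j))"
    by (simp only: sum.shift_bounds_Suc_ivl One_nat_def)
  also have "\<dots> \<le> (?F h - ?F 0) + (?F n - ?F (Suc h))"
    using left right by simp
  also have "\<dots> \<le> ?F n - ?F 0"
    using arcsine_primitive_mono[OF n, of h "Suc h"] h by simp
  also have "\<dots> = pi" using n by simp
  finally show ?thesis .
qed

lemma arcsine_weight_nonneg: "0 \<le> x \<Longrightarrow> x \<le> c \<Longrightarrow> 0 \<le> arcsine_weight c x"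
  unfolding arcsine_weight_def by simp

lemma sum_arcsine_weight_ge_primitive:
  fixes n :: nat
  assumes "2 \<le> n"
  shows "2 * (arcsine_primitive n (n div 2) - arcsine_primitive n 1)
    \<le> (\<Sum>i=1..<n. arcsine_weight n (real i))"
proof -
  define h where "h = n div 2"
  have h: "1 \<le> h" "h \<le> n - h" "n - h \<le> Suc h" "n - h < n" using assms by (auto simp: h_def)
  let ?F = "arcsine_primitive n" and ?f = "arcsine_weight n"
  have n: "2 \<le> real n" using assms by simp
  have left: "?F (real h) - ?F (real 1) \<le> (\<Sum>j=1..<h. ?f (real j))"
  proof (rule antimono_diff_le_sum)
    show "antimono_on {real 1..<real h} ?f"
      by (rule monotone_on_subset[OF antimono_on_arcsine_weight]) (auto simp: h_def)
  qed (use h n in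
      \<open>auto intro: arcsine_primitive_has_real_derivative continuous_on_arcsine_primitive\<close>)
  have "?F (real (n - 1)) - ?F (real (n - h)) \<le> (\<Sum>j=n-h..<n-1. ?f (real (Suc j)))"
  proof (rule mono_diff_le_sum_Suc)
    show "mono_on {real (n - h)<..real (n - 1)} ?f"
      by (rule monotone_on_subset[OF mono_on_arcsine_weight]) (auto simp: h_def)
  qed (use h n in
      \<open>auto intro: arcsine_primitive_has_real_derivative continuous_on_arcsine_primitive\<close>)
  also have "(\<Sum>j=n-h..<n-1. ?f (real (Suc j))) = (\<Sum>i=Suc (n-h)..<n. ?f i)"
    using sum.shift_bounds_Suc_ivl[of "\<lambda>i. ?f (real i)" "n - h" "n - 1"] assms by simp
  finally have right: "?F (real (n - 1)) - ?F (real (n - h)) \<le> (\<Sum>i=Suc (n-h)..<n. ?f i)" .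
  have middle: "0 \<le> (\<Sum>i=h..<Suc (n-h). ?f i)"
    by (intro sum_nonneg arcsine_weight_nonneg) auto
  have "?F (real (n - 1)) = - ?F 1" "?F (real (n - h)) = - ?F h"
    using arcsine_primitive_reflect[of "real n" 1] arcsine_primitive_reflect[of "real n" h] h n
    by (auto simp: of_nat_diff)
  then have "2 * (?F h - ?F 1) = (?F h - ?F 1) + (?F (real (n - 1)) - ?F (real (n - h)))"
    by simp
  also have "\<dots> \<le> (\<Sum>i=1..<h. ?f i) + (\<Sum>i=h..<Suc (n-h). ?f i) + (\<Sum>i=Suc (n-h)..<n. ?f i)"
    using left right middle by simp
  also have "\<dots> = (\<Sum>i=1..<n. ?f i)"
    using h by (simp only: sum.atLeastLessThan_concat Suc_le_eq le_SucI)
  finally show ?thesis by (simp add: h_def)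
qed

lemma sum_arcsine_weight_ge:
  fixes n :: nat
  assumes "2 \<le> n"
  shows "- 2 * arcsin (1 / n) - 2 * arcsin (2 / n - 1) \<le> (\<Sum>i=1..<n. arcsine_weight n (real i))"
proof -
  have "- arcsin (1 / n) \<le> arcsine_primitive n (n div 2)"
    using assms by (intro arcsine_primitive_ge_near_midpoint) auto
  moreover have "arcsine_primitive n 1 = arcsin (2 / n - 1)"
    by (simp add: arcsine_primitive_def)
  ultimately show ?thesis
    using sum_arcsine_weight_ge_primitive[OF assms] by simp
qed

lemma GG_path:
  "GG (path_V n) (path_E n) = sqrt (real n - 2) * (\<Sum>i=1..<n. arcsine_weight n (real i))"
proof -
  have "GG (path_V n) (path_E n) = (\<Sum>i<n - 1. GG_edge_weight (path_V n) (path_E n) i (Suc i))"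
    by (rule GG_eq_sum_GG_edge_weight[where a = id, simplified])
      (auto simp: inj_on_def doubleton_eq_iff edges_path_E path_E_def)
  also have "\<dots> = (\<Sum>i<n - 1. sqrt (real n - 2) * arcsine_weight n (Suc i))"
  proof (rule sum.cong[OF refl])
    fix i assume "i \<in> {..<n - 1}"
    then have "Suc i < n" "real (n - Suc i) = real n - real (Suc i)" by (auto simp: of_nat_diff)
    then show "GG_edge_weight (path_V n) (path_E n) i (Suc i)
        = sqrt (real n - 2) * arcsine_weight n (Suc i)"
      by (simp add: GG_edge_weight_def Let_def n_closer_path_E_left n_closer_path_E_right
          arcsine_weight_def real_sqrt_divide)
  qed
  also have "\<dots> = sqrt (real n - 2) * (\<Sum>i<n - 1. arcsine_weight n (Suc i))"
    by (simp add: sum_distrib_left)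
  also have "(\<Sum>i<n - 1. arcsine_weight n (Suc i)) = (\<Sum>i=1..<n. arcsine_weight n (real i))"
    using sum.shift_bounds_Suc_ivl[of "\<lambda>i. arcsine_weight n (real i)" 0 "n - 1"]
    by (cases n) (simp_all add: lessThan_atLeast0)
  finally show ?thesis .
qed

lemma tendsto_sum_arcsine_weight: "(\<lambda>n. \<Sum>i=1..<n. arcsine_weight n (real i)) \<longlonglongrightarrow> pi"
proof (rule real_tendsto_sandwich)
  have "(\<lambda>n. 1 / real n) \<longlonglongrightarrow> 0" "(\<lambda>n. 2 / real n - 1) \<longlonglongrightarrow> 0 - 1"
    by (intro tendsto_intros)+
  moreover have "\<forall>\<^sub>F n in sequentially. 1 / real n \<in> {-1..1} \<and> 2 / real n - 1 \<in> {-1..1}"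
    using eventually_ge_at_top[of "2::nat"] by eventually_elim (auto simp: field_simps)
  ultimately have "(\<lambda>n. arcsin (1 / real n)) \<longlonglongrightarrow> arcsin 0"
      "(\<lambda>n. arcsin (2 / real n - 1)) \<longlonglongrightarrow> arcsin (-1)"
    by (auto intro!: continuous_on_tendsto_compose[OF continuous_on_arcsin'] elim: eventually_mono
        simp del: arcsin_0 arcsin_minus_1)
  then have "(\<lambda>n. - 2 * arcsin (1 / real n) - 2 * arcsin (2 / real n - 1))
      \<longlonglongrightarrow> - 2 * arcsin 0 - 2 * arcsin (-1)"
    by (intro tendsto_intros)
  then show "(\<lambda>n. - 2 * arcsin (1 / real n) - 2 * arcsin (2 / real n - 1)) \<longlonglongrightarrow> pi"
    by simp
  show "\<forall>\<^sub>F n in sequentially. - 2 * arcsin (1 / real n) - 2 * arcsin (2 / real n - 1)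
      \<le> (\<Sum>i=1..<n. arcsine_weight n (real i))"
    using eventually_ge_at_top[of "2::nat"] by eventually_elim (rule sum_arcsine_weight_ge)
  show "\<forall>\<^sub>F n in sequentially. (\<Sum>i=1..<n. arcsine_weight n (real i)) \<le> pi"
    using eventually_ge_at_top[of "1::nat"] by eventually_elim (rule sum_arcsine_weight_le_pi)
qed (rule tendsto_const)

theorem corollary4:
  shows "(\<lambda>n. GG (path_V n) (path_E n) / (pi * sqrt (real n - 2))) \<longlonglongrightarrow> 1"
proof -
  have "(\<lambda>n. (\<Sum>i=1..<n. arcsine_weight n (real i)) / pi) \<longlonglongrightarrow> pi / pi"
    by (intro tendsto_divide tendsto_sum_arcsine_weight tendsto_const) simp
  moreover have "\<forall>\<^sub>F n in sequentially.
      (\<Sum>i=1..<n. arcsine_weight n (real i)) / pi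
        = GG (path_V n) (path_E n) / (pi * sqrt (real n - 2))"
    using eventually_gt_at_top[of "2::nat"]
  proof eventually_elim
    case (elim n)
    then have "sqrt (real n - 2) \<noteq> 0" by simp
    then show ?case
      unfolding GG_path mult.commute[of pi]
      by (rule nonzero_mult_divide_mult_cancel_left[symmetric])
  qed
  ultimately show ?thesis
    by (auto intro: Lim_transform_eventually)
qed

end
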